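(* Let $\Phi\in C^1_c([0,\infty))$ (continuously differentiable with compact support) and $T>0$. Then the functions $t\mapsto\int_0^\infty f_\varepsilon(t,x)\Phi(x)\,dx$, $\varepsilon\in(0,1)$, are bounded in $W^{1,\infty}(0,T)$ uniformly with respect to $\varepsilon\in(0,1)$.
   Context: Let $\mathbb R_+=(0,\infty)$. The kernels $K,C:[0,\infty)^2\to[0,\infty)$ are symmetric and belong to $W^{1,\infty}_{\mathrm{loc}}([0,\infty)^2)$. There are constants $\alpha,\beta\ge0$ with $\partial_xK\ge-\alpha$ and $\partial_xC\ge-\beta$ a.e. They satisfy: - (CH1) for every $R\ge1$, $\sup_{x\in[0,R]}K(x,y)/y\to0$ as $y\to\infty$; - (CH2) there is a constant $\mathcal M\ge1$ such that $\sup_{x\in[0,R],\,y\ge R}C(x,y)\le\mathcal M$ for every $R\ge1$. Let $f^{\mathrm{in}}\in L^1(\mathbb R_+,(1+x)dx)$, $f^{\mathrm{in}}\ge0$ a.e., and $\|f^{\mathrm{in}}\|_{0,1}=\int_0^\infty(1+x)f^{\mathrm{in}}$. For $\varepsilon\in(0,1)$, $i\ge1$ let $\Lambda^\varepsilon_i=[(i-\tfrac12)\varepsilon,(i+\tfrac12)\varepsilon)$. Define $$c^{\mathrm{in},\varepsilon}_i=\frac1\varepsilon\int_{\Lambda^\varepsilon_i}f^{\mathrm{in}},\quad K^\varepsilon_{i,j}=\frac1\varepsilon\int_{\Lambda^\varepsilon_i\times\Lambda^\varepsilon_j}K,\quad C^\varepsilon_{i,j}=\frac1\varepsilon\int_{\Lambda^\varepsilon_i\times\Lambda^\varepsilon_j}C.$$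 The $\varepsilon$-discrete system is, with $c^\varepsilon_0\equiv0$, $i\ge1$, $$\frac{dc^\varepsilon_i}{dt}=c^\varepsilon_{i-1}\sum_{j=1}^{i-1}jK^\varepsilon_{i-1,j}c^\varepsilon_j-c^\varepsilon_i\sum_{j=1}^{i}jK^\varepsilon_{i,j}c^\varepsilon_j-\sum_{j\ge i}K^\varepsilon_{i,j}c^\varepsilon_ic^\varepsilon_j+c^\varepsilon_{i-1}\sum_{j\ge i-1}jC^\varepsilon_{i-1,j}c^\varepsilon_j-c^\varepsilon_i\sum_{j\ge i}jC^\varepsilon_{i,j}c^\varepsilon_j-\sum_{j=1}^{i}C^\varepsilon_{i,j}c^\varepsilon_ic^\varepsilon_j,$$ with $c^\varepsilon_i(0)=c^{\mathrm{in},\varepsilon}_i$. Standing assumption: for each $\varepsilon$, $c^\varepsilon$ is a solution on $[0,\infty)$ with nonnegative $C^1$ components and convergent series. For every finitely supported real $(\phi_i)$, $$\frac{d}{dt}\sum_i\phi_ic^\varepsilon_i=\sum_{i}\sum_{j=1}^{i}[j(\phi_{i+1}-\phi_i)-\phi_j]K^\varepsilon_{i,j}c^\varepsilon_ic^\varepsilon_j+\sum_i\sum_{j\ge i}[j(\phi_{i+1}-\phi_i)-\phi_j]C^\varepsilon_{i,j}c^\varepsilon_ic^\varepsilon_j .$$ Also $\sum_i ic^\varepsilon_i(t)\le\sum_i ic^{\mathrm{in},\varepsilon}_i$ for all $t\ge0$. Set $f_\varepsilon(t,x)=\sum_i c^\varepsilon_i(t)\mathbf 1_{\Lambda^\varepsilon_i}(x)$.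 *)

theory Defs
  imports "HOL-Analysis.Analysis"
begin

definition Lam :: "real \<Rightarrow> nat \<Rightarrow> real set" where
  "Lam \<epsilon> i = {(real i - 1/2) * \<epsilon> ..< (real i + 1/2) * \<epsilon>}"

definition cin :: "(real \<Rightarrow> real) \<Rightarrow> real \<Rightarrow> nat \<Rightarrow> real" where
  "cin fin \<epsilon> i = (1/\<epsilon>) * (LINT x:Lam \<epsilon> i|lborel. fin x)"

definition kd :: "(real \<Rightarrow> real \<Rightarrow> real) \<Rightarrow> real \<Rightarrow> nat \<Rightarrow> nat \<Rightarrow> real" where
  "kd K \<epsilon> i j = (1/\<epsilon>) * (LINT p:(Lam \<epsilon> i \<times> Lam \<epsilon> j)|lborel. K (fst p) (snd p))"

text \<open>Right-hand side of the eps-discrete system at index i (i >= 1), for a sequence c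
  with the convention c 0 = 0.  Sums over j >= m are written as series over n with j = n + m.\<close>
definition disc_rhs :: "(nat \<Rightarrow> nat \<Rightarrow> real) \<Rightarrow> (nat \<Rightarrow> nat \<Rightarrow> real) \<Rightarrow> (nat \<Rightarrow> real) \<Rightarrow> nat \<Rightarrow> real" where
  "disc_rhs Kd Cd c i =
     c (i - 1) * (\<Sum>j=1..i - 1. real j * Kd (i - 1) j * c j)
   - c i * (\<Sum>j=1..i. real j * Kd i j * c j)
   - (\<Sum>n. Kd i (n + i) * c i * c (n + i))
   + c (i - 1) * (\<Sum>n. real (n + (i - 1)) * Cd (i - 1) (n + (i - 1)) * c (n + (i - 1)))
   - c i * (\<Sum>n. real (n + i) * Cd i (n + i) * c (n + i))
   - (\<Sum>j=1..i. Cd i j * c i * c j)"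

text \<open>Terms of the weak formulation: K-part at row i (finite sum over j = 1..i),
  C-part at row i, column j = m + i.\<close>
definition wK :: "(nat \<Rightarrow> nat \<Rightarrow> real) \<Rightarrow> (nat \<Rightarrow> real) \<Rightarrow> (nat \<Rightarrow> real) \<Rightarrow> nat \<Rightarrow> real" where
  "wK Kd c \<phi> i = (\<Sum>j=1..i. (real j * (\<phi> (i + 1) - \<phi> i) - \<phi> j) * Kd i j * c i * c j)"

definition wC :: "(nat \<Rightarrow> nat \<Rightarrow> real) \<Rightarrow> (nat \<Rightarrow> real) \<Rightarrow> (nat \<Rightarrow> real) \<Rightarrow> nat \<Rightarrow> nat \<Rightarrow> real" where
  "wC Cd c \<phi> i m = (real (m + i) * (\<phi> (i + 1) - \<phi> i) - \<phi> (m + i)) * Cd i (m + i) * c i * c (m + i)"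

definition feps :: "real \<Rightarrow> (real \<Rightarrow> nat \<Rightarrow> real) \<Rightarrow> real \<Rightarrow> real \<Rightarrow> real" where
  "feps \<epsilon> c t x = (\<Sum>n. c t (Suc n) * indicator (Lam \<epsilon> (Suc n)) x)"

end

theory Submission
  imports Defs
begin

(* Test the eps-discrete system with the cell integrals phi_i = int_{Lam_i} Phi, so that
   g(t) = int f_eps(t,x) Phi(x) dx becomes the finite sum G(t) = sum_i phi_i c_i(t).  Since Phi
   is Lipschitz and vanishes beyond R, |phi_i| <= eps L R, |phi_(i+1) - phi_i| <= L eps^2, and
   phi_i = 0 once i eps >= R + 1.  The weak formulation with the nonincreasing test sequence
   1_{[1,N]} shows that the number of clusters decreases, so eps sum_i c_i <= ||f_in||_{0,1};
   together with eps^2 sum_i i c_i <= ||f_in||_{0,1} from the mass bound this bounds G.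
   The weak formulation also writes G' as a sum of terms [j (phi_(i+1) - phi_i) - phi_j]
   K_ij c_i c_j (j <= i), resp. C_ij c_i c_j (j >= i), and only cells below R + 1 contribute.
   There (CH1) gives K_ij = O(eps (1 + i eps)) and (CH2) gives C_ij = O(eps), while the
   coefficients are O(eps), resp. O(eps (j eps + R)); number and mass bounds then give
   |G'| <= const ||f_in||_{0,1}^2.  The ODE form of the system shows that G' is continuous,
   so G is the integral of G'.  All bounds hold on [0, oo) uniformly in eps. *)

section \<open>Cells of the discretisation\<close>

lemma mem_Lam_iff: "x \<in> Lam \<epsilon> i \<longleftrightarrow> (real i - 1/2) * \<epsilon> \<le> x \<and> x < (real i + 1/2) * \<epsilon>"
  by (simp add: Lam_def)

lemma Lam_pos:
  assumes "0 < \<epsilon>" "1 \<le> i" "x \<in> Lam \<epsilon> i"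
  shows "0 < x"
proof -
  have "0 < (real i - 1/2) * \<epsilon>"
    using assms(1,2) by simp
  with assms(3) show ?thesis
    by (simp add: mem_Lam_iff)
qed

lemma Lam_subset_Ioi: "0 < \<epsilon> \<Longrightarrow> 1 \<le> i \<Longrightarrow> Lam \<epsilon> i \<subseteq> {0<..}"
  using Lam_pos by auto

lemma disjoint_family_Lam:
  assumes "0 < \<epsilon>"
  shows "disjoint_family (Lam \<epsilon>)"
unfolding disjoint_family_on_def
proof (intro ballI impI)
  fix i j :: nat
  assume "i \<noteq> j"
  show "Lam \<epsilon> i \<inter> Lam \<epsilon> j = {}"
  proof (rule ccontr)
    assume "Lam \<epsilon> i \<inter> Lam \<epsilon> j \<noteq> {}"
    then obtain x where "x \<in> Lam \<epsilon> i" "x \<in> Lam \<epsilon> j"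
      by blast
    then have "(real i - 1/2) * \<epsilon> < (real j + 1/2) * \<epsilon>" "(real j - 1/2) * \<epsilon> < (real i + 1/2) * \<epsilon>"
      by (auto simp: mem_Lam_iff)
    then have "real i < real j + 1" "real j < real i + 1"
      using assms by (simp_all add: mult_less_cancel_right)
    with \<open>i \<noteq> j\<close> show False
      by linarith
  qed
qed

lemma sets_Lam [measurable]: "Lam \<epsilon> i \<in> sets borel"
  by (simp add: Lam_def)

lemma emeasure_Lam: "0 \<le> \<epsilon> \<Longrightarrow> emeasure lborel (Lam \<epsilon> i) = ennreal \<epsilon>"
  by (simp add: Lam_def algebra_simps)

lemma measure_Lam: "0 \<le> \<epsilon> \<Longrightarrow> measure lborel (Lam \<epsilon> i) = \<epsilon>"
  by (simp add: measure_def emeasure_Lam)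

lemma emeasure_Lam_Times: "0 \<le> \<epsilon> \<Longrightarrow> emeasure lborel (Lam \<epsilon> i \<times> Lam \<epsilon> j) = ennreal (\<epsilon> * \<epsilon>)"
  by (simp add: lborel_prod[symmetric] lborel.emeasure_pair_measure_Times emeasure_Lam ennreal_mult)

lemma indicator_Lam_Suc_shift: "indicator (Lam \<epsilon> (Suc i)) (\<epsilon> + x) = (indicator (Lam \<epsilon> i) x :: real)"
  by (auto simp: indicator_def mem_Lam_iff algebra_simps)

lemma abs_set_integral_le_measure:
  fixes f :: "'a \<Rightarrow> real"
  assumes f: "set_integrable M A f" and A: "A \<in> sets M" "emeasure M A < \<infinity>"
    and bound: "\<And>x. x \<in> A \<Longrightarrow> \<bar>f x\<bar> \<le> B"
  shows "\<bar>LINT x:A|M. f x\<bar> \<le> B * measure M A"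
proof -
  have "\<bar>LINT x:A|M. f x\<bar> \<le> (LINT x:A|M. \<bar>f x\<bar>)"
    using set_integral_norm_bound[OF f] by simp
  also have "\<dots> \<le> (LINT x:A|M. B)"
  proof (rule set_integral_mono)
    show "set_integrable M A (\<lambda>x. \<bar>f x\<bar>)"
      using f by (rule set_integrable_abs)
    show "set_integrable M A (\<lambda>x. B)"
      using integrable_mult_left[OF integrable_real_indicator[OF A], of B]
      by (simp add: set_integrable_def mult.commute)
  qed (rule bound)
  also have "\<dots> = B * measure M A"
    using A by (simp add: set_integral_const)
  finally show ?thesis .
qed

definition cell_integral :: "real \<Rightarrow> (real \<Rightarrow> real) \<Rightarrow> nat \<Rightarrow> real" where
  "cell_integral \<epsilon> f i = (LINT x:Lam \<epsilon> i|lborel. f x)"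

lemma set_integrable_Lam:
  fixes f :: "real \<Rightarrow> real"
  assumes "continuous_on {0..} f" "0 < \<epsilon>" "1 \<le> i"
  shows "set_integrable lborel (Lam \<epsilon> i) f"
proof -
  let ?I = "{(real i - 1/2) * \<epsilon> .. (real i + 1/2) * \<epsilon>}"
  have "0 \<le> (real i - 1/2) * \<epsilon>"
    using assms(2,3) by simp
  then have "set_integrable lborel ?I f"
    by (intro borel_integrable_atLeastAtMost' continuous_on_subset[OF assms(1)]) auto
  then show ?thesis
    by (rule set_integrable_subset) (auto simp: mem_Lam_iff)
qed

lemma abs_cell_integral_le:
  assumes "continuous_on {0..} f" "0 < \<epsilon>" "1 \<le> i" "\<And>x. 0 \<le> x \<Longrightarrow> \<bar>f x\<bar> \<le> B"
  shows "\<bar>cell_integral \<epsilon> f i\<bar> \<le> \<epsilon> * B"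
proof -
  have "\<bar>cell_integral \<epsilon> f i\<bar> \<le> B * measure lborel (Lam \<epsilon> i)"
    unfolding cell_integral_def
  proof (rule abs_set_integral_le_measure[OF set_integrable_Lam[OF assms(1-3)]])
    show "\<bar>f x\<bar> \<le> B" if "x \<in> Lam \<epsilon> i" for x
      using assms(4) Lam_pos[OF assms(2,3) that] by simp
  qed (use assms(2) in \<open>auto simp: emeasure_Lam\<close>)
  then show ?thesis
    using assms(2) by (simp add: measure_Lam mult.commute)
qed

lemma abs_cell_integral_Suc_diff_le:
  assumes lip: "L-lipschitz_on {0..} f" and "0 < \<epsilon>" "1 \<le> i"
  shows "\<bar>cell_integral \<epsilon> f (Suc i) - cell_integral \<epsilon> f i\<bar> \<le> L * \<epsilon> * \<epsilon>"
proof -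
  have cont: "continuous_on {0..} f"
    using lip by (rule lipschitz_on_continuous_on)
  have cont_shift: "continuous_on {0..} (\<lambda>x. f (\<epsilon> + x))"
    by (rule continuous_on_compose2[OF cont]) (use \<open>0 < \<epsilon>\<close> in \<open>auto intro!: continuous_intros\<close>)
  have "cell_integral \<epsilon> f (Suc i) = (\<integral>x. indicator (Lam \<epsilon> (Suc i)) (\<epsilon> + 1 * x) * f (\<epsilon> + 1 * x) \<partial>lborel)"
    using lborel_integral_real_affine[of 1 "\<lambda>x. indicator (Lam \<epsilon> (Suc i)) x * f x" \<epsilon>]
    by (simp add: cell_integral_def set_lebesgue_integral_def)
  also have "\<dots> = (LINT x:Lam \<epsilon> i|lborel. f (\<epsilon> + x))"
    by (simp add: indicator_Lam_Suc_shift set_lebesgue_integral_def)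
  finally have "cell_integral \<epsilon> f (Suc i) - cell_integral \<epsilon> f i = (LINT x:Lam \<epsilon> i|lborel. f (\<epsilon> + x) - f x)"
    using set_integrable_Lam[OF cont_shift] set_integrable_Lam[OF cont] assms(2,3)
    by (simp add: cell_integral_def)
  also have "\<bar>\<dots>\<bar> \<le> (L * \<epsilon>) * measure lborel (Lam \<epsilon> i)"
  proof (rule abs_set_integral_le_measure)
    show "set_integrable lborel (Lam \<epsilon> i) (\<lambda>x. f (\<epsilon> + x) - f x)"
      using set_integrable_Lam[OF cont_shift] set_integrable_Lam[OF cont] assms(2,3) by simp
    show "\<bar>f (\<epsilon> + x) - f x\<bar> \<le> L * \<epsilon>" if "x \<in> Lam \<epsilon> i" for x
      using lipschitz_onD[OF lip, of "x + \<epsilon>" x] Lam_pos[OF assms(2,3) that] \<open>0 < \<epsilon>\<close>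
      by (simp add: dist_real_def add.commute)
  qed (use \<open>0 < \<epsilon>\<close> in \<open>auto simp: emeasure_Lam\<close>)
  finally show ?thesis
    using \<open>0 < \<epsilon>\<close> by (simp add: measure_Lam)
qed

lemma cell_integral_eq_0:
  assumes "\<And>x. x \<in> Lam \<epsilon> i \<Longrightarrow> f x = 0"
  shows "cell_integral \<epsilon> f i = 0"
  using set_lebesgue_integral_cong[of "Lam \<epsilon> i" lborel f "\<lambda>_. 0"] assms
  by (simp add: cell_integral_def)

lemma integral_feps_mult:
  fixes \<Phi> :: "real \<Rightarrow> real"
  assumes cont: "continuous_on {0..} \<Phi>" and "0 < \<epsilon>"
    and vanish: "\<And>i x. N < i \<Longrightarrow> x \<in> Lam \<epsilon> i \<Longrightarrow> \<Phi> x = 0"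
  shows "(LINT x:{0<..}|lborel. feps \<epsilon> c t x * \<Phi> x) = (\<Sum>i=1..N. c t i * cell_integral \<epsilon> \<Phi> i)"
proof -
  define u where "u n = (\<lambda>x. c t (Suc n) * (indicator (Lam \<epsilon> (Suc n)) x * \<Phi> x))" for n
  have pointwise: "indicator {0<..} x * (feps \<epsilon> c t x * \<Phi> x) = (\<Sum>n<N. u n x)" for x
  proof (cases "\<Phi> x = 0")
    case False
    have outside: "c t (Suc n) * indicator (Lam \<epsilon> (Suc n)) x = 0" if "n \<notin> {..<N}" for n
      using vanish[of "Suc n" x] that False by (auto simp: indicator_def)
    have "feps \<epsilon> c t x = (\<Sum>n<N. c t (Suc n) * indicator (Lam \<epsilon> (Suc n)) x)"
      unfolding feps_def by (rule suminf_finite) (use outside in auto)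
    then have "indicator {0<..} x * (feps \<epsilon> c t x * \<Phi> x)
        = (\<Sum>n<N. indicator {0<..} x * (c t (Suc n) * indicator (Lam \<epsilon> (Suc n)) x) * \<Phi> x)"
      by (simp only: sum_distrib_left sum_distrib_right mult.assoc)
    also have "\<dots> = (\<Sum>n<N. u n x)"
      using Lam_pos[OF \<open>0 < \<epsilon>\<close>, of _ x] by (intro sum.cong refl) (auto simp: u_def indicator_def)
    finally show ?thesis .
  qed (simp add: u_def)
  have u_int: "integrable lborel (u n)" for n
    using set_integrable_Lam[OF cont \<open>0 < \<epsilon>\<close>, of "Suc n"]
    by (simp add: u_def set_integrable_def)
  have "(LINT x:{0<..}|lborel. feps \<epsilon> c t x * \<Phi> x) = (\<integral>x. (\<Sum>n<N. u n x) \<partial>lborel)"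
    by (simp add: set_lebesgue_integral_def pointwise)
  also have "\<dots> = (\<Sum>n<N. c t (Suc n) * cell_integral \<epsilon> \<Phi> (Suc n))"
    using u_int by (simp add: u_def cell_integral_def set_lebesgue_integral_def)
  also have "\<dots> = (\<Sum>i=1..N. c t i * cell_integral \<epsilon> \<Phi> i)"
    by (simp add: sum.atLeast1_atMost_eq)
  finally show ?thesis .
qed

definition norm01 :: "(real \<Rightarrow> real) \<Rightarrow> real" where
  "norm01 f = (LINT x:{0<..}|lborel. (1 + x) * f x)"

lemma weighted_cell_integral_le:
  fixes fin :: "real \<Rightarrow> real"
  assumes fin_L1: "set_integrable lborel {0<..} (\<lambda>x. (1 + x) * fin x)"
    and fin_nonneg: "AE x in lborel. 0 < x \<longrightarrow> 0 \<le> fin x" and "0 < \<epsilon>" "1 \<le> i"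
    and a: "\<And>x. x \<in> Lam \<epsilon> i \<Longrightarrow> a \<le> 1 + x"
  shows "a * cell_integral \<epsilon> fin i \<le> (LINT x:Lam \<epsilon> i|lborel. (1 + x) * fin x)"
proof -
  have "a * cell_integral \<epsilon> fin i = (\<integral>x. indicator (Lam \<epsilon> i) x * (a * fin x) \<partial>lborel)"
    by (simp add: cell_integral_def set_lebesgue_integral_def ac_simps)
  also have "\<dots> \<le> (\<integral>x. indicator (Lam \<epsilon> i) x * ((1 + x) * fin x) \<partial>lborel)"
  proof (rule integral_mono_AE')
    show "integrable lborel (\<lambda>x. indicator (Lam \<epsilon> i) x * ((1 + x) * fin x))"
      using set_integrable_subset[OF fin_L1 _ Lam_subset_Ioi[OF \<open>0 < \<epsilon>\<close> \<open>1 \<le> i\<close>]]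
      by (simp add: set_integrable_def)
    show "AE x in lborel. indicator (Lam \<epsilon> i) x * (a * fin x) \<le> indicator (Lam \<epsilon> i) x * ((1 + x) * fin x)"
      using fin_nonneg
      by eventually_elim (use a Lam_pos[OF \<open>0 < \<epsilon>\<close> \<open>1 \<le> i\<close>] in \<open>auto simp: indicator_def intro: mult_right_mono\<close>)
    show "AE x in lborel. 0 \<le> indicator (Lam \<epsilon> i) x * ((1 + x) * fin x)"
      using fin_nonneg
      by eventually_elim (use Lam_pos[OF \<open>0 < \<epsilon>\<close> \<open>1 \<le> i\<close>] in \<open>fastforce simp: indicator_def\<close>)
  qed
  finally show ?thesis
    by (simp add: set_lebesgue_integral_def)
qed

lemma sum_cell_integrals_le_norm01:
  fixes fin :: "real \<Rightarrow> real" and a :: "nat \<Rightarrow> real"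
  assumes fin_L1: "set_integrable lborel {0<..} (\<lambda>x. (1 + x) * fin x)"
    and fin_nonneg: "AE x in lborel. 0 < x \<longrightarrow> 0 \<le> fin x" and "0 < \<epsilon>"
    and a: "\<And>i x. 1 \<le> i \<Longrightarrow> x \<in> Lam \<epsilon> i \<Longrightarrow> a i \<le> 1 + x"
  shows "(\<Sum>i=1..N. a i * cell_integral \<epsilon> fin i) \<le> norm01 fin"
proof -
  define G where "G = (\<lambda>x. (1 + x) * fin x)"
  have G_int: "set_integrable lborel (Lam \<epsilon> i) G" if "1 \<le> i" for i
    using set_integrable_subset[OF fin_L1 _ Lam_subset_Ioi[OF \<open>0 < \<epsilon>\<close> that]]
    by (simp add: G_def)
  have "(\<Sum>i=1..N. a i * cell_integral \<epsilon> fin i) \<le> (\<Sum>i=1..N. LINT x:Lam \<epsilon> i|lborel. G x)"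
    using weighted_cell_integral_le[OF fin_L1 fin_nonneg \<open>0 < \<epsilon>\<close> _ a]
    by (intro sum_mono) (simp add: G_def)
  also have "\<dots> = (LINT x:(\<Union>i\<in>{1..N}. Lam \<epsilon> i)|lborel. G x)"
    using disjoint_family_Lam[OF \<open>0 < \<epsilon>\<close>] G_int
    by (intro set_integral_finite_Union[symmetric]) (auto simp: disjoint_family_on_def)
  also have "\<dots> \<le> (LINT x:{0<..}|lborel. G x)"
    unfolding set_lebesgue_integral_def
  proof (rule integral_mono_AE')
    show "integrable lborel (\<lambda>x. indicator {0<..} x *\<^sub>R G x)"
      using fin_L1 by (simp add: set_integrable_def G_def)
    show "AE x in lborel. indicator (\<Union>i\<in>{1..N}. Lam \<epsilon> i) x *\<^sub>R G x \<le> indicator {0<..} x *\<^sub>R G x"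
      using fin_nonneg by eventually_elim (use Lam_pos[OF \<open>0 < \<epsilon>\<close>] in \<open>fastforce simp: G_def indicator_def\<close>)
    show "AE x in lborel. 0 \<le> indicator {0<..} x *\<^sub>R G x"
      using fin_nonneg by eventually_elim (auto simp: G_def indicator_def)
  qed
  finally show ?thesis
    by (simp add: norm01_def G_def)
qed

section \<open>The test function\<close>

lemma C1_vanishing_imp_lipschitz:
  fixes f f' :: "real \<Rightarrow> real"
  assumes deriv: "\<And>x. 0 \<le> x \<Longrightarrow> (f has_real_derivative f' x) (at x within {0..})"
    and cont: "continuous_on {0..} f'" and vanish: "\<And>x. R \<le> x \<Longrightarrow> f x = 0"
  obtains L where "L-lipschitz_on {0..} f"
proof -
  obtain B where "0 \<le> B" and B: "\<And>x. x \<in> {0..R} \<Longrightarrow> norm (f' x) \<le> B"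
    by (rule continuous_on_compact_bound[of "{0..R}" f'])
      (auto intro: continuous_on_subset[OF cont])
  have near: "\<bar>f x - f y\<bar> \<le> B * \<bar>x - y\<bar>" if "x \<in> {0..R}" "y \<in> {0..R}" for x y
  proof -
    have "norm (f x - f y) \<le> B * norm (x - y)"
    proof (rule field_differentiable_bound[OF _ _ B that])
      show "(f has_field_derivative f' z) (at z within {0..R})" if "z \<in> {0..R}" for z
        using deriv[of z] that by (auto intro: DERIV_subset)
    qed simp
    then show ?thesis
      by simp
  qed
  have "B-lipschitz_on {0..} f"
  proof (rule lipschitz_on_leI)
    fix x y :: real
    assume "x \<in> {0..}" "y \<in> {0..}" "x \<le> y"
    consider "y \<le> R" | "R \<le> x" | "x < R" "R < y"
      by linarith
    then show "dist (f x) (f y) \<le> B * dist x y"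
    proof cases
      case 1
      then show ?thesis
        using near[of x y] \<open>x \<in> {0..}\<close> \<open>x \<le> y\<close> by (simp add: dist_real_def)
    next
      case 2
      then show ?thesis
        using vanish[of x] vanish[of y] \<open>x \<le> y\<close> \<open>0 \<le> B\<close> by (simp add: dist_real_def)
    next
      case 3
      have "\<bar>f x - f R\<bar> \<le> B * \<bar>x - R\<bar>"
        using near[of x R] \<open>x \<in> {0..}\<close> 3 by simp
      also have "\<dots> \<le> B * \<bar>x - y\<bar>"
        using 3 \<open>0 \<le> B\<close> by (intro mult_left_mono) auto
      finally show ?thesis
        using vanish[of R] vanish[of y] 3 by (simp add: dist_real_def)
    qed
  qed fact
  then show ?thesis ..
qed

lemma C1_compact_support_imp_lipschitz:
  fixes f :: "real \<Rightarrow> real"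
  assumes "\<exists>f'. (\<forall>x\<ge>0. (f has_real_derivative f' x) (at x within {0..})) \<and> continuous_on {0..} f'"
    and "\<exists>R. \<forall>x\<ge>R. f x = 0"
  obtains L R where "1 \<le> R" "L-lipschitz_on {0..} f" "\<And>x. R \<le> x \<Longrightarrow> f x = 0"
proof -
  obtain f' R where "\<And>x. 0 \<le> x \<Longrightarrow> (f has_real_derivative f' x) (at x within {0..})"
    "continuous_on {0..} f'" and vanish: "\<And>x. R \<le> x \<Longrightarrow> f x = 0"
    using assms by blast
  then obtain L where "L-lipschitz_on {0..} f"
    by (rule C1_vanishing_imp_lipschitz[of f f' R])
  moreover have "\<And>x. max 1 R \<le> x \<Longrightarrow> f x = 0"
    using vanish by simp
  ultimately show ?thesis
    using that[of "max 1 R" L] by simp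
qed

lemma abs_le_of_lipschitz_vanishing:
  fixes f :: "real \<Rightarrow> real"
  assumes lip: "L-lipschitz_on {0..} f" and vanish: "\<And>x. R \<le> x \<Longrightarrow> f x = 0"
    and "0 \<le> R" "0 \<le> x"
  shows "\<bar>f x\<bar> \<le> L * R"
proof (cases "R \<le> x")
  case True
  then show ?thesis
    using vanish lipschitz_on_nonneg[OF lip] \<open>0 \<le> R\<close> by simp
next
  case False
  have "\<bar>f x - f R\<bar> \<le> L * \<bar>x - R\<bar>"
    using lipschitz_onD[OF lip, of x R] assms(3,4) by (simp add: dist_real_def)
  also have "\<dots> \<le> L * R"
    using False \<open>0 \<le> x\<close> lipschitz_on_nonneg[OF lip] by (intro mult_left_mono) auto
  finally show ?thesis
    using vanish[of R] by simp
qed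

section \<open>Discretised kernels\<close>

lemma kd_nonneg:
  assumes "0 < \<epsilon>" "1 \<le> i" "1 \<le> j" "\<And>x y. 0 \<le> x \<Longrightarrow> 0 \<le> y \<Longrightarrow> 0 \<le> K x y"
  shows "0 \<le> kd K \<epsilon> i j"
proof -
  have "0 \<le> (LINT p:Lam \<epsilon> i \<times> Lam \<epsilon> j|lborel. K (fst p) (snd p))"
    unfolding set_lebesgue_integral_def
    using Lam_pos[OF assms(1,2)] Lam_pos[OF assms(1,3)]
    by (intro integral_nonneg_AE AE_I2) (auto simp: indicator_def less_imp_le assms(4) mem_Times_iff)
  then show ?thesis
    using assms(1) by (simp add: kd_def)
qed

lemma kd_le:
  assumes "0 < \<epsilon>" "0 \<le> B" "\<And>x y. x \<in> Lam \<epsilon> i \<Longrightarrow> y \<in> Lam \<epsilon> j \<Longrightarrow> K x y \<le> B"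
  shows "kd K \<epsilon> i j \<le> \<epsilon> * B"
proof -
  let ?A = "Lam \<epsilon> i \<times> Lam \<epsilon> j"
  have A: "?A \<in> sets lborel" "emeasure lborel ?A < \<infinity>"
    using emeasure_Lam_Times[of \<epsilon> i j] assms(1) by (simp_all add: lborel_prod[symmetric])
  have "(LINT p:?A|lborel. K (fst p) (snd p)) \<le> (\<integral>p. indicator ?A p * B \<partial>lborel)"
    unfolding set_lebesgue_integral_def
  proof (rule integral_mono_AE')
    show "integrable lborel (\<lambda>p. indicator ?A p * B)"
      using integrable_mult_left[OF integrable_real_indicator[OF A], of B] by (simp add: mult.commute)
  qed (auto intro!: AE_I2 simp: indicator_def assms(2,3) mem_Times_iff)
  also have "\<dots> = \<epsilon> * \<epsilon> * B"
    using assms(1) by (simp add: measure_def emeasure_Lam_Times)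
  finally show ?thesis
    using assms(1) by (simp add: kd_def field_simps)
qed

lemma locally_lipschitz_kernel_bounded:
  fixes K :: "real \<Rightarrow> real \<Rightarrow> real"
  assumes "\<forall>R>0. \<exists>L. L-lipschitz_on ({0..R} \<times> {0..R}) (\<lambda>p. K (fst p) (snd p))" "0 < R"
  obtains B where "\<And>x y. x \<in> {0..R} \<Longrightarrow> y \<in> {0..R} \<Longrightarrow> \<bar>K x y\<bar> \<le> B"
proof -
  obtain L where "L-lipschitz_on ({0..R} \<times> {0..R}) (\<lambda>p. K (fst p) (snd p))"
    using assms by blast
  then obtain B where B: "\<And>p. p \<in> {0..R} \<times> {0..R} \<Longrightarrow> norm (K (fst p) (snd p)) \<le> B"
    using continuous_on_compact_bound[OF compact_Times[OF compact_Icc compact_Icc] lipschitz_on_continuous_on]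
    by blast
  show ?thesis
  proof (rule that)
    fix x y
    assume "x \<in> {0..R}" "y \<in> {0..R}"
    then show "\<bar>K x y\<bar> \<le> B"
      using B[of "(x, y)"] by simp
  qed
qed

lemma kernel_sublinear_at_top:
  fixes K :: "real \<Rightarrow> real \<Rightarrow> real"
  assumes loc: "\<forall>R>0. \<exists>L. L-lipschitz_on ({0..R} \<times> {0..R}) (\<lambda>p. K (fst p) (snd p))"
    and CH1: "((\<lambda>y. SUP x\<in>{0..R}. K x y / y) \<longlongrightarrow> 0) at_top"
  obtains Y where "0 < Y" "R \<le> Y" "\<And>x y. x \<in> {0..R} \<Longrightarrow> Y \<le> y \<Longrightarrow> K x y \<le> y"
proof -
  obtain Y0 where Y0: "\<And>y. Y0 \<le> y \<Longrightarrow> (SUP x\<in>{0..R}. K x y / y) < 1"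
    using order_tendstoD(2)[OF CH1, of 1] by (auto simp: eventually_at_top_linorder)
  define Y where "Y = max 1 (max Y0 R)"
  have "K x y \<le> y" if "x \<in> {0..R}" "Y \<le> y" for x y
  proof -
    have "0 < y" "R \<le> y"
      using that(2) by (auto simp: Y_def)
    obtain B where B: "\<And>u v. u \<in> {0..y} \<Longrightarrow> v \<in> {0..y} \<Longrightarrow> \<bar>K u v\<bar> \<le> B"
      using locally_lipschitz_kernel_bounded[OF loc \<open>0 < y\<close>] by blast
    have "K u y / y \<le> B / y" if "u \<in> {0..R}" for u
      using B[of u y] that \<open>0 < y\<close> \<open>R \<le> y\<close> by (intro divide_right_mono) auto
    then have "bdd_above ((\<lambda>u. K u y / y) ` {0..R})"
      by (rule bdd_aboveI2)
    then have "K x y / y \<le> (SUP u\<in>{0..R}. K u y / y)"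
      by (rule cSUP_upper[OF that(1)])
    also have "\<dots> < 1"
      using Y0 that(2) by (simp add: Y_def)
    finally show ?thesis
      using \<open>0 < y\<close> by (simp add: divide_less_eq)
  qed
  then show ?thesis
    using that[of Y] by (simp add: Y_def)
qed

lemma kernel_linear_growth:
  fixes K :: "real \<Rightarrow> real \<Rightarrow> real"
  assumes sym: "\<forall>x\<ge>0. \<forall>y\<ge>0. K x y = K y x"
    and loc: "\<forall>R>0. \<exists>L. L-lipschitz_on ({0..R} \<times> {0..R}) (\<lambda>p. K (fst p) (snd p))"
    and CH1: "((\<lambda>y. SUP x\<in>{0..R}. K x y / y) \<longlongrightarrow> 0) at_top"
  obtains A where "0 \<le> A" "\<And>x y. 0 \<le> x \<Longrightarrow> 0 \<le> y \<Longrightarrow> y \<le> R \<Longrightarrow> K x y \<le> A * (1 + x)"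
proof -
  obtain Y where "0 < Y" "R \<le> Y" and far: "\<And>x y. x \<in> {0..R} \<Longrightarrow> Y \<le> y \<Longrightarrow> K x y \<le> y"
    using kernel_sublinear_at_top[OF loc CH1] by blast
  obtain B where B: "\<And>x y. x \<in> {0..Y} \<Longrightarrow> y \<in> {0..Y} \<Longrightarrow> \<bar>K x y\<bar> \<le> B"
    using locally_lipschitz_kernel_bounded[OF loc \<open>0 < Y\<close>] by blast
  have "K x y \<le> max 1 B * (1 + x)" if "0 \<le> x" "0 \<le> y" "y \<le> R" for x y
  proof (cases "Y \<le> x")
    case True
    then have "K x y \<le> 1 * (1 + x)"
      using far[of y x] sym that by simp
    also have "\<dots> \<le> max 1 B * (1 + x)"
      using \<open>0 \<le> x\<close> by (intro mult_right_mono) auto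
    finally show ?thesis .
  next
    case False
    then have "K x y \<le> max 1 B * 1"
      using B[of x y] that \<open>R \<le> Y\<close> by (simp add: abs_le_iff le_max_iff_disj)
    also have "\<dots> \<le> max 1 B * (1 + x)"
      using \<open>0 \<le> x\<close> by (intro mult_left_mono) auto
    finally show ?thesis .
  qed
  then show ?thesis
    using that[of "max 1 B"] by simp
qed

lemma kernel_bounded_strip:
  fixes C :: "real \<Rightarrow> real \<Rightarrow> real"
  assumes nonneg: "\<forall>x\<ge>0. \<forall>y\<ge>0. C x y \<ge> 0"
    and loc: "\<forall>R>0. \<exists>L. L-lipschitz_on ({0..R} \<times> {0..R}) (\<lambda>p. C (fst p) (snd p))"
    and CH2: "\<exists>\<M>\<ge>1. \<forall>R\<ge>1. \<forall>x\<in>{0..R}. \<forall>y\<ge>R. C x y \<le> \<M>" and "1 \<le> R"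
  obtains B where "0 \<le> B" "\<And>x y. 0 \<le> x \<Longrightarrow> x \<le> R \<Longrightarrow> 0 \<le> y \<Longrightarrow> C x y \<le> B"
proof -
  obtain \<M> where \<M>: "\<And>x y. x \<in> {0..R} \<Longrightarrow> R \<le> y \<Longrightarrow> C x y \<le> \<M>"
    using CH2 \<open>1 \<le> R\<close> by blast
  have "0 < R"
    using \<open>1 \<le> R\<close> by simp
  then obtain B where B: "\<And>x y. x \<in> {0..R} \<Longrightarrow> y \<in> {0..R} \<Longrightarrow> \<bar>C x y\<bar> \<le> B"
    using locally_lipschitz_kernel_bounded[OF loc] by blast
  have bound: "C x y \<le> max \<M> B" if "0 \<le> x" "x \<le> R" "0 \<le> y" for x y
    using \<M>[of x y] B[of x y] that by (cases "R \<le> y") (auto simp: abs_le_iff)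
  have "0 \<le> C 0 0" "C 0 0 \<le> max \<M> B"
    using nonneg bound[of 0 0] \<open>0 < R\<close> by simp_all
  then have "0 \<le> max \<M> B"
    by linarith
  with bound show ?thesis
    using that by blast
qed

section \<open>Series and derivatives\<close>

lemma abs_suminf_le:
  fixes f :: "nat \<Rightarrow> real"
  assumes "summable f" "\<And>n. \<bar>\<Sum>i<n. f i\<bar> \<le> B"
  shows "\<bar>suminf f\<bar> \<le> B"
  using LIMSEQ_le_const2[OF tendsto_rabs[OF summable_LIMSEQ[OF assms(1)]]] assms(2) by blast

lemma sum_le_of_partial_sums_le:
  fixes f :: "nat \<Rightarrow> real"
  assumes "\<And>i. 1 \<le> i \<Longrightarrow> 0 \<le> f i" "\<And>n. (\<Sum>i=1..n. f i) \<le> B" "finite S" "S \<subseteq> {1..}"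
  shows "sum f S \<le> B"
proof -
  have "sum f S \<le> (\<Sum>i=1..Max (insert 0 S). f i)"
    using assms(1,3,4) by (intro sum_mono2) (auto simp: subset_eq)
  also have "\<dots> \<le> B"
    by (rule assms(2))
  finally show ?thesis .
qed

lemma nonincreasing_of_derivative_within_Ici:
  fixes f f' :: "real \<Rightarrow> real"
  assumes deriv: "\<And>s. 0 \<le> s \<Longrightarrow> (f has_real_derivative f' s) (at s within {0..})"
    and nonpos: "\<And>s. 0 \<le> s \<Longrightarrow> f' s \<le> 0" and "0 \<le> t"
  shows "f t \<le> f 0"
proof (rule DERIV_nonpos_imp_decreasing_open[OF \<open>0 \<le> t\<close>])
  fix s :: real
  assume "0 < s" "s < t"
  have "(f has_real_derivative f' s) (at s within {0<..})"
    using deriv[of s] \<open>0 < s\<close> by (auto intro: DERIV_subset)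
  then have "(f has_real_derivative f' s) (at s)"
    using at_within_open[of s "{0<..}"] \<open>0 < s\<close> by simp
  then show "\<exists>y. (f has_real_derivative y) (at s) \<and> y \<le> 0"
    using nonpos[of s] \<open>0 < s\<close> by auto
next
  show "continuous_on {0..t} f"
    unfolding continuous_on_eq_continuous_within
  proof
    fix s
    assume "s \<in> {0..t}"
    then show "continuous (at s within {0..t}) f"
      using continuous_within_subset[OF DERIV_continuous[OF deriv[of s]], of "{0..t}"] by auto
  qed
qed

lemma has_real_derivative_within_Ici_unique:
  assumes "(f has_real_derivative a) (at t within {0..})" "(f has_real_derivative b) (at t within {0..})"
    and "0 \<le> t"
  shows "a = b"
proof -
  have sub: "cbox t (t + 1) \<subseteq> {0..}"
    using \<open>0 \<le> t\<close> by auto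
  show ?thesis
    using DERIV_subset[OF assms(1) sub] DERIV_subset[OF assms(2) sub]
    by (intro vector_derivative_unique_within_closed_interval[of t "t + 1" t f])
      (auto simp: has_real_derivative_iff_has_vector_derivative)
qed

lemma integral_of_continuous_derivative_within_Ici:
  fixes G h :: "real \<Rightarrow> real"
  assumes deriv: "\<And>t. 0 \<le> t \<Longrightarrow> (G has_real_derivative h t) (at t within {0..})"
    and cont: "continuous_on {0..} h" and "0 \<le> s" "s \<le> t"
  shows "G t - G s = (LINT \<tau>:{s..t}|lborel. h \<tau>)"
proof -
  have "(LBINT \<tau>=s..t. h \<tau>) = G t - G s"
  proof (rule interval_integral_FTC_finite)
    show "continuous_on {min s t..max s t} h"
      using \<open>0 \<le> s\<close> \<open>s \<le> t\<close> by (intro continuous_on_subset[OF cont]) auto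
    fix \<tau>
    assume "min s t \<le> \<tau>" "\<tau> \<le> max s t"
    then have "(G has_real_derivative h \<tau>) (at \<tau> within {min s t..max s t})"
      using \<open>0 \<le> s\<close> \<open>s \<le> t\<close> by (intro DERIV_subset[OF deriv]) auto
    then show "(G has_vector_derivative h \<tau>) (at \<tau> within {min s t..max s t})"
      by (simp add: has_real_derivative_iff_has_vector_derivative)
  qed
  then show ?thesis
    using interval_integral_Icc[OF \<open>s \<le> t\<close>, of h] by simp
qed

lemma finite_support_if_zero_beyond:
  fixes \<phi> :: "nat \<Rightarrow> real"
  assumes "\<And>i. N < i \<Longrightarrow> \<phi> i = 0"
  shows "finite {i. \<phi> i \<noteq> 0}"
  by (rule finite_subset[of _ "{..N}"]) (use assms in \<open>auto simp: not_le[symmetric]\<close>)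

section \<open>Weak solutions of the discrete system\<close>

definition weak_rhs :: "(nat \<Rightarrow> nat \<Rightarrow> real) \<Rightarrow> (nat \<Rightarrow> nat \<Rightarrow> real) \<Rightarrow> (nat \<Rightarrow> real) \<Rightarrow> (nat \<Rightarrow> real) \<Rightarrow> real"
  where "weak_rhs Kd Cd c \<phi> = (\<Sum>n. wK Kd c \<phi> (Suc n)) + (\<Sum>n. \<Sum>m. wC Cd c \<phi> (Suc n) m)"

locale weak_solution =
  fixes Kd Cd :: "nat \<Rightarrow> nat \<Rightarrow> real" and c :: "real \<Rightarrow> nat \<Rightarrow> real"
  assumes Kd_nonneg: "\<And>i j. 1 \<le> i \<Longrightarrow> 1 \<le> j \<Longrightarrow> 0 \<le> Kd i j"
    and Cd_nonneg: "\<And>i j. 1 \<le> i \<Longrightarrow> 1 \<le> j \<Longrightarrow> 0 \<le> Cd i j"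
    and c_nonneg: "\<And>t i. 0 \<le> t \<Longrightarrow> 1 \<le> i \<Longrightarrow> 0 \<le> c t i"
    and weak: "\<And>\<phi> t. finite {i. \<phi> i \<noteq> 0} \<Longrightarrow> 0 \<le> t \<Longrightarrow>
         summable (\<lambda>n. wK Kd (c t) \<phi> (Suc n))
       \<and> (\<forall>i\<ge>1. summable (\<lambda>m. wC Cd (c t) \<phi> i m))
       \<and> summable (\<lambda>n. \<Sum>m. wC Cd (c t) \<phi> (Suc n) m)
       \<and> ((\<lambda>s. \<Sum>i\<in>{i. \<phi> i \<noteq> 0 \<and> i \<ge> 1}. \<phi> i * c s i) has_real_derivative weak_rhs Kd Cd (c t) \<phi>)
           (at t within {0..})"
begin

lemma test_sum_has_weak_derivative:
  assumes supp: "\<And>i. N < i \<Longrightarrow> \<phi> i = 0" and "0 \<le> t"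
  shows "((\<lambda>s. \<Sum>i=1..N. \<phi> i * c s i) has_real_derivative weak_rhs Kd Cd (c t) \<phi>) (at t within {0..})"
proof -
  have "i \<le> N" if "\<phi> i \<noteq> 0" for i
    using supp that not_le by blast
  then have "(\<Sum>i\<in>{i. \<phi> i \<noteq> 0 \<and> i \<ge> 1}. \<phi> i * c s i) = (\<Sum>i=1..N. \<phi> i * c s i)" for s
    by (intro sum.mono_neutral_left) auto
  then show ?thesis
    using weak[OF finite_support_if_zero_beyond[of N \<phi>, OF supp] \<open>0 \<le> t\<close>] by simp
qed

lemma weak_rhs_nonpos:
  assumes nonneg: "\<And>i. 0 \<le> \<phi> i" and noninc: "\<And>i. 1 \<le> i \<Longrightarrow> \<phi> (Suc i) \<le> \<phi> i"
    and "finite {i. \<phi> i \<noteq> 0}" "0 \<le> t"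
  shows "weak_rhs Kd Cd (c t) \<phi> \<le> 0"
proof -
  note summable = weak[OF assms(3,4)]
  have coeff: "real j * (\<phi> (i + 1) - \<phi> i) - \<phi> j \<le> 0" if "1 \<le> i" for i j
  proof -
    have "real j * (\<phi> (i + 1) - \<phi> i) \<le> 0"
      using noninc[OF that] by (intro mult_nonneg_nonpos) auto
    then show ?thesis
      using nonneg[of j] by linarith
  qed
  have "wK Kd (c t) \<phi> (Suc n) \<le> 0" for n
    unfolding wK_def using coeff Kd_nonneg c_nonneg[OF \<open>0 \<le> t\<close>]
    by (intro sum_nonpos mult_nonpos_nonneg) auto
  then have K_part: "(\<Sum>n. wK Kd (c t) \<phi> (Suc n)) \<le> 0"
    using summable by (intro suminf_le_const sum_nonpos) auto
  have "wC Cd (c t) \<phi> (Suc n) m \<le> 0" for n m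
    unfolding wC_def by (intro mult_nonpos_nonneg coeff Cd_nonneg c_nonneg[OF \<open>0 \<le> t\<close>]) auto
  then have "(\<Sum>m. wC Cd (c t) \<phi> (Suc n) m) \<le> 0" for n
    using summable by (intro suminf_le_const sum_nonpos) auto
  then have C_part: "(\<Sum>n. \<Sum>m. wC Cd (c t) \<phi> (Suc n) m) \<le> 0"
    using summable by (intro suminf_le_const) (auto intro: sum_nonpos)
  show ?thesis
    using K_part C_part by (simp add: weak_rhs_def)
qed

lemma number_decreasing:
  assumes "0 \<le> t"
  shows "(\<Sum>i=1..N. c t i) \<le> (\<Sum>i=1..N. c 0 i)"
proof -
  define \<phi> :: "nat \<Rightarrow> real" where "\<phi> i = (if i \<le> N then 1 else 0)" for i
  have supp: "\<phi> i = 0" if "N < i" for i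
    using that by (simp add: \<phi>_def)
  have "(\<Sum>i=1..N. \<phi> i * c s i) = (\<Sum>i=1..N. c s i)" for s
    by (simp add: \<phi>_def)
  then have deriv: "((\<lambda>s. \<Sum>i=1..N. c s i) has_real_derivative weak_rhs Kd Cd (c s) \<phi>) (at s within {0..})"
    if "0 \<le> s" for s
    using test_sum_has_weak_derivative[of N \<phi>, OF supp that] by simp
  have nonpos: "weak_rhs Kd Cd (c s) \<phi> \<le> 0" if "0 \<le> s" for s
    using finite_support_if_zero_beyond[of N \<phi>, OF supp] that by (intro weak_rhs_nonpos) (auto simp: \<phi>_def)
  show ?thesis
    by (rule nonincreasing_of_derivative_within_Ici[OF deriv nonpos \<open>0 \<le> t\<close>])
qed

end

locale discrete_solution = weak_solution "kd K \<epsilon>" "kd C \<epsilon>" c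
  for K C :: "real \<Rightarrow> real \<Rightarrow> real" and \<epsilon> :: real and c :: "real \<Rightarrow> nat \<Rightarrow> real" +
  fixes fin :: "real \<Rightarrow> real"
  assumes eps: "0 < \<epsilon>" "\<epsilon> < 1"
    and fin_L1: "set_integrable lborel {0<..} (\<lambda>x. (1 + x) * fin x)"
    and fin_nonneg: "AE x in lborel. 0 < x \<longrightarrow> 0 \<le> fin x"
    and c_init: "\<And>i. 1 \<le> i \<Longrightarrow> c 0 i = cin fin \<epsilon> i"
    and c_mass: "\<And>t. 0 \<le> t \<Longrightarrow> summable (\<lambda>n. real (Suc n) * c t (Suc n))
       \<and> (\<Sum>n. real (Suc n) * c t (Suc n)) \<le> (\<Sum>n. real (Suc n) * cin fin \<epsilon> (Suc n))"
    and c_ode: "\<And>i t. 1 \<le> i \<Longrightarrow> 0 \<le> t \<Longrightarrow>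
       ((\<lambda>s. c s i) has_real_derivative disc_rhs (kd K \<epsilon>) (kd C \<epsilon>) (c t) i) (at t within {0..})"
    and c_rhs_cont: "\<And>i. 1 \<le> i \<Longrightarrow> continuous_on {0..} (\<lambda>t. disc_rhs (kd K \<epsilon>) (kd C \<epsilon>) (c t) i)"
begin

lemma cell_integral_fin: "cell_integral \<epsilon> fin i = \<epsilon> * cin fin \<epsilon> i"
  using eps by (simp add: cin_def cell_integral_def)

lemma cin_nonneg:
  assumes "1 \<le> i"
  shows "0 \<le> cin fin \<epsilon> i"
proof -
  have "0 \<le> cell_integral \<epsilon> fin i"
    unfolding cell_integral_def set_lebesgue_integral_def
    using fin_nonneg
    by (intro integral_nonneg_AE, eventually_elim)
      (use Lam_pos[OF eps(1) assms] in \<open>auto simp: indicator_def\<close>)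
  then show ?thesis
    using eps by (simp add: cell_integral_fin zero_le_mult_iff)
qed

lemma number_bound:
  assumes "0 \<le> t" "finite S" "S \<subseteq> {1..}"
  shows "\<epsilon> * (\<Sum>i\<in>S. c t i) \<le> norm01 fin"
proof -
  have "(\<Sum>i=1..N. \<epsilon> * c t i) \<le> norm01 fin" for N
  proof -
    have "(\<Sum>i=1..N. \<epsilon> * c t i) \<le> (\<Sum>i=1..N. \<epsilon> * c 0 i)"
      using number_decreasing[OF assms(1), of N] eps by (simp add: sum_distrib_left[symmetric])
    also have "\<dots> = (\<Sum>i=1..N. 1 * cell_integral \<epsilon> fin i)"
      by (simp add: c_init cell_integral_fin)
    also have "\<dots> \<le> norm01 fin"
      by (rule sum_cell_integrals_le_norm01[OF fin_L1 fin_nonneg eps(1)])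
        (use Lam_pos[OF eps(1)] in fastforce)
    finally show ?thesis .
  qed
  then show ?thesis
    using sum_le_of_partial_sums_le[of "\<lambda>i. \<epsilon> * c t i"] assms c_nonneg eps
    by (simp add: sum_distrib_left)
qed

lemma initial_mass_bound:
  "summable (\<lambda>n. real (Suc n) * cin fin \<epsilon> (Suc n))"
  "\<epsilon>\<^sup>2 * (\<Sum>n. real (Suc n) * cin fin \<epsilon> (Suc n)) \<le> norm01 fin"
proof -
  have partial: "(\<Sum>n<N. real (Suc n) * cin fin \<epsilon> (Suc n)) \<le> norm01 fin / \<epsilon>\<^sup>2" for N
  proof -
    have "\<epsilon>\<^sup>2 * (\<Sum>n<N. real (Suc n) * cin fin \<epsilon> (Suc n)) = (\<Sum>i=1..N. (\<epsilon> * real i) * cell_integral \<epsilon> fin i)"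
      by (simp add: sum.atLeast1_atMost_eq sum_distrib_left cell_integral_fin power2_eq_square ac_simps)
    also have "\<dots> \<le> norm01 fin"
    proof (rule sum_cell_integrals_le_norm01[OF fin_L1 fin_nonneg eps(1)])
      fix i x
      assume "1 \<le> i" "x \<in> Lam \<epsilon> i"
      then show "\<epsilon> * real i \<le> 1 + x"
        using eps by (auto simp: mem_Lam_iff algebra_simps)
    qed
    finally show ?thesis
      using eps by (simp add: field_simps)
  qed
  show summable: "summable (\<lambda>n. real (Suc n) * cin fin \<epsilon> (Suc n))"
    by (rule summableI_nonneg_bounded[OF _ partial]) (simp add: cin_nonneg)
  show "\<epsilon>\<^sup>2 * (\<Sum>n. real (Suc n) * cin fin \<epsilon> (Suc n)) \<le> norm01 fin"
    using suminf_le_const[OF summable partial] eps by (simp add: field_simps)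
qed

lemma mass_bound:
  assumes "0 \<le> t" "finite S" "S \<subseteq> {1..}"
  shows "\<epsilon>\<^sup>2 * (\<Sum>i\<in>S. real i * c t i) \<le> norm01 fin"
proof -
  have "(\<Sum>i=1..N. \<epsilon>\<^sup>2 * (real i * c t i)) \<le> norm01 fin" for N
  proof -
    have "(\<Sum>i=1..N. real i * c t i) = (\<Sum>n<N. real (Suc n) * c t (Suc n))"
      by (simp add: sum.atLeast1_atMost_eq)
    also have "\<dots> \<le> (\<Sum>n. real (Suc n) * c t (Suc n))"
      using c_mass[OF assms(1)] c_nonneg[OF assms(1)] by (intro sum_le_suminf) auto
    also have "\<dots> \<le> (\<Sum>n. real (Suc n) * cin fin \<epsilon> (Suc n))"
      using c_mass[OF assms(1)] by simp
    finally have "\<epsilon>\<^sup>2 * (\<Sum>i=1..N. real i * c t i) \<le> \<epsilon>\<^sup>2 * (\<Sum>n. real (Suc n) * cin fin \<epsilon> (Suc n))"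
      by (rule mult_left_mono) simp
    also have "\<dots> \<le> norm01 fin"
      by (rule initial_mass_bound(2))
    finally show ?thesis
      by (simp add: sum_distrib_left)
  qed
  then show ?thesis
    using sum_le_of_partial_sums_le[of "\<lambda>i. \<epsilon>\<^sup>2 * (real i * c t i)"] assms c_nonneg
    by (simp add: sum_distrib_left)
qed

end

section \<open>Testing against the cell integrals of \<open>\<Phi>\<close>\<close>

locale discrete_solution_test = discrete_solution +
  fixes \<Phi> :: "real \<Rightarrow> real" and L R A B :: real
  assumes Phi_lipschitz: "L-lipschitz_on {0..} \<Phi>"
    and Phi_vanish: "\<And>x. R \<le> x \<Longrightarrow> \<Phi> x = 0" and R_nonneg: "0 \<le> R"
    (* R + 2: the cells Lam eps i with i eps < R + 1 lie below R + 2 *)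
    and K_growth: "\<And>x y. 0 \<le> x \<Longrightarrow> 0 \<le> y \<Longrightarrow> y \<le> R + 2 \<Longrightarrow> K x y \<le> A * (1 + x)"
    and C_bound: "\<And>x y. 0 \<le> x \<Longrightarrow> x \<le> R + 2 \<Longrightarrow> 0 \<le> y \<Longrightarrow> C x y \<le> B"
    and A_nonneg: "0 \<le> A" and B_nonneg: "0 \<le> B"
begin

lemma L_nonneg: "0 \<le> L"
  using Phi_lipschitz by (rule lipschitz_on_nonneg)

definition phi :: "nat \<Rightarrow> real" where
  "phi = cell_integral \<epsilon> \<Phi>"

definition coeff :: "nat \<Rightarrow> nat \<Rightarrow> real" where
  "coeff i j = real j * (phi (i + 1) - phi i) - phi j"

lemma abs_phi_le: "1 \<le> i \<Longrightarrow> \<bar>phi i\<bar> \<le> \<epsilon> * (L * R)"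
  unfolding phi_def
  using abs_le_of_lipschitz_vanishing[OF Phi_lipschitz Phi_vanish R_nonneg]
  by (intro abs_cell_integral_le lipschitz_on_continuous_on[OF Phi_lipschitz] eps(1))

lemma abs_phi_Suc_diff_le: "1 \<le> i \<Longrightarrow> \<bar>phi (Suc i) - phi i\<bar> \<le> L * \<epsilon> * \<epsilon>"
  unfolding phi_def by (rule abs_cell_integral_Suc_diff_le[OF Phi_lipschitz eps(1)])

lemma Phi_eq_0_on_Lam:
  assumes "R + 1 \<le> real i * \<epsilon>" "x \<in> Lam \<epsilon> i"
  shows "\<Phi> x = 0"
  using assms eps by (intro Phi_vanish) (auto simp: mem_Lam_iff algebra_simps)

lemma phi_eq_0: "R + 1 \<le> real i * \<epsilon> \<Longrightarrow> phi i = 0"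
  unfolding phi_def by (rule cell_integral_eq_0[OF Phi_eq_0_on_Lam])

lemma coeff_eq_0:
  assumes "R + 1 \<le> real i * \<epsilon>" "R + 1 \<le> real j * \<epsilon>"
  shows "coeff i j = 0"
proof -
  have "R + 1 \<le> real (i + 1) * \<epsilon>"
    using assms(1) eps by (simp add: algebra_simps)
  then show ?thesis
    using phi_eq_0 assms by (simp add: coeff_def)
qed

lemma abs_coeff_le:
  assumes "1 \<le> i" "1 \<le> j"
  shows "\<bar>coeff i j\<bar> \<le> L * \<epsilon> * \<epsilon> * real j + \<epsilon> * (L * R)"
proof -
  have "\<bar>coeff i j\<bar> \<le> real j * \<bar>phi (Suc i) - phi i\<bar> + \<bar>phi j\<bar>"
    unfolding coeff_def using abs_triangle_ineq4[of "real j * (phi (Suc i) - phi i)" "phi j"]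
    by (simp add: abs_mult)
  also have "\<dots> \<le> real j * (L * \<epsilon> * \<epsilon>) + \<epsilon> * (L * R)"
    using abs_phi_Suc_diff_le[OF assms(1)] abs_phi_le[OF assms(2)]
    by (intro add_mono mult_left_mono) auto
  finally show ?thesis
    by (simp add: ac_simps)
qed

lemma kd_K_le:
  assumes "1 \<le> i" "1 \<le> j" "real j * \<epsilon> < R + 1"
  shows "kd K \<epsilon> i j \<le> \<epsilon> * (A * (2 + real i * \<epsilon>))"
proof (rule kd_le[OF eps(1)])
  show "0 \<le> A * (2 + real i * \<epsilon>)"
    using A_nonneg eps by simp
  fix x y
  assume x: "x \<in> Lam \<epsilon> i" and y: "y \<in> Lam \<epsilon> j"
  have "y \<le> R + 2" "1 + x \<le> 2 + real i * \<epsilon>"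
    using x y assms(3) eps by (auto simp: mem_Lam_iff algebra_simps)
  then have "K x y \<le> A * (1 + x)"
    using K_growth Lam_pos[OF eps(1) assms(1) x] Lam_pos[OF eps(1) assms(2) y] by simp
  also have "\<dots> \<le> A * (2 + real i * \<epsilon>)"
    using \<open>1 + x \<le> 2 + real i * \<epsilon>\<close> A_nonneg by (rule mult_left_mono)
  finally show "K x y \<le> A * (2 + real i * \<epsilon>)" .
qed

lemma kd_C_le:
  assumes "1 \<le> i" "1 \<le> j" "real i * \<epsilon> < R + 1"
  shows "kd C \<epsilon> i j \<le> \<epsilon> * B"
proof (rule kd_le[OF eps(1) B_nonneg])
  fix x y
  assume x: "x \<in> Lam \<epsilon> i" and y: "y \<in> Lam \<epsilon> j"
  have "x \<le> R + 2"
    using x assms(3) eps by (auto simp: mem_Lam_iff algebra_simps)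
  then show "C x y \<le> B"
    using C_bound Lam_pos[OF eps(1) assms(1) x] Lam_pos[OF eps(1) assms(2) y] by simp
qed

lemma abs_coeff_kd_K_le:
  assumes "1 \<le> j" "j \<le> i"
  shows "\<bar>coeff i j * kd K \<epsilon> i j\<bar> \<le> (2 * R + 1) * L * A * \<epsilon>\<^sup>2 * (2 + real i * \<epsilon>)"
proof (cases "R + 1 \<le> real j * \<epsilon>")
  case True
  have "real j * \<epsilon> \<le> real i * \<epsilon>"
    using assms(2) eps by (intro mult_right_mono) auto
  then have "coeff i j = 0"
    using coeff_eq_0 True by simp
  then show ?thesis
    using R_nonneg L_nonneg A_nonneg eps by simp
next
  case False
  have "\<bar>coeff i j\<bar> \<le> L * \<epsilon> * (real j * \<epsilon>) + \<epsilon> * (L * R)"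
    using abs_coeff_le[of i j] assms by (simp add: ac_simps)
  also have "\<dots> \<le> L * \<epsilon> * (R + 1) + \<epsilon> * (L * R)"
    using False L_nonneg eps by (intro add_mono mult_left_mono) auto
  finally have coeff_le: "\<bar>coeff i j\<bar> \<le> (2 * R + 1) * L * \<epsilon>"
    by (simp add: algebra_simps)
  have "\<bar>coeff i j * kd K \<epsilon> i j\<bar> = \<bar>coeff i j\<bar> * kd K \<epsilon> i j"
    using Kd_nonneg[of i j] assms by (simp add: abs_mult)
  also have "\<dots> \<le> ((2 * R + 1) * L * \<epsilon>) * (\<epsilon> * (A * (2 + real i * \<epsilon>)))"
    using coeff_le kd_K_le[of i j] False Kd_nonneg[of i j] assms by (intro mult_mono) auto
  finally show ?thesis
    by (simp add: power2_eq_square ac_simps)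
qed

lemma abs_coeff_kd_C_le:
  assumes "1 \<le> i" "i \<le> j"
  shows "\<bar>coeff i j * kd C \<epsilon> i j\<bar> \<le> B * L * \<epsilon>\<^sup>2 * (\<epsilon> * real j + R)"
proof (cases "R + 1 \<le> real i * \<epsilon>")
  case True
  have "real i * \<epsilon> \<le> real j * \<epsilon>"
    using assms(2) eps by (intro mult_right_mono) auto
  then have "coeff i j = 0"
    using coeff_eq_0 True by simp
  then show ?thesis
    using R_nonneg L_nonneg B_nonneg eps by simp
next
  case False
  have coeff_le: "\<bar>coeff i j\<bar> \<le> L * \<epsilon> * (\<epsilon> * real j + R)"
    using abs_coeff_le[of i j] assms by (simp add: algebra_simps)
  have "\<bar>coeff i j * kd C \<epsilon> i j\<bar> = \<bar>coeff i j\<bar> * kd C \<epsilon> i j"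
    using Cd_nonneg[of i j] assms by (simp add: abs_mult)
  also have "\<dots> \<le> (L * \<epsilon> * (\<epsilon> * real j + R)) * (\<epsilon> * B)"
    using coeff_le kd_C_le[of i j] False Cd_nonneg[of i j] assms by (intro mult_mono) auto
  finally show ?thesis
    by (simp add: power2_eq_square ac_simps)
qed

lemma wK_eq: "wK Kd u phi i = (\<Sum>j=1..i. coeff i j * Kd i j * u i * u j)"
  by (simp add: wK_def coeff_def)

lemma wC_eq: "wC Cd u phi i m = coeff i (m + i) * Cd i (m + i) * u i * u (m + i)"
  by (simp add: wC_def coeff_def)

lemma number_mass_bound_shifted:
  assumes "0 \<le> t" "1 \<le> i"
  shows "\<epsilon> * (\<Sum>m<n. c t (m + i)) \<le> norm01 fin"
    and "\<epsilon>\<^sup>2 * (\<Sum>m<n. real (m + i) * c t (m + i)) \<le> norm01 fin"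
proof -
  have inj: "inj_on (\<lambda>m. m + i) {..<n}"
    by (simp add: inj_on_def)
  have sub: "(\<lambda>m. m + i) ` {..<n} \<subseteq> {1..}"
    using assms(2) by auto
  show "\<epsilon> * (\<Sum>m<n. c t (m + i)) \<le> norm01 fin"
    using number_bound[OF assms(1) _ sub] by (simp add: sum.reindex[OF inj])
  show "\<epsilon>\<^sup>2 * (\<Sum>m<n. real (m + i) * c t (m + i)) \<le> norm01 fin"
    using mass_bound[OF assms(1) _ sub] by (simp add: sum.reindex[OF inj])
qed

lemma abs_wK_le:
  assumes "0 \<le> t" "1 \<le> i"
  shows "\<bar>wK (kd K \<epsilon>) (c t) phi i\<bar>
    \<le> (2 * R + 1) * L * A * norm01 fin * (2 * (\<epsilon> * c t i) + \<epsilon>\<^sup>2 * (real i * c t i))"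
proof -
  let ?Q = "(2 * R + 1) * L * A"
  have "\<bar>wK (kd K \<epsilon>) (c t) phi i\<bar> \<le> (\<Sum>j=1..i. \<bar>coeff i j * kd K \<epsilon> i j\<bar> * c t i * c t j)"
    unfolding wK_eq using c_nonneg[OF assms(1)] assms(2)
    by (intro order.trans[OF sum_abs] sum_mono) (simp add: abs_mult)
  also have "\<dots> \<le> (\<Sum>j=1..i. ?Q * \<epsilon>\<^sup>2 * (2 + real i * \<epsilon>) * c t i * c t j)"
    using abs_coeff_kd_K_le c_nonneg[OF assms(1)] assms(2)
    by (intro sum_mono mult_right_mono) auto
  also have "\<dots> = ?Q * \<epsilon> * (2 + real i * \<epsilon>) * c t i * (\<epsilon> * (\<Sum>j=1..i. c t j))"
    by (simp add: sum_distrib_left power2_eq_square ac_simps)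
  also have "\<dots> \<le> ?Q * \<epsilon> * (2 + real i * \<epsilon>) * c t i * norm01 fin"
    using number_bound[OF assms(1), of "{1..i}"] c_nonneg[OF assms] R_nonneg L_nonneg A_nonneg eps
    by (intro mult_left_mono) auto
  finally show ?thesis
    by (simp add: power2_eq_square algebra_simps)
qed

lemma abs_wK_suminf_le:
  assumes "0 \<le> t" "summable (\<lambda>n. wK (kd K \<epsilon>) (c t) phi (Suc n))"
  shows "\<bar>\<Sum>n. wK (kd K \<epsilon>) (c t) phi (Suc n)\<bar> \<le> 3 * (2 * R + 1) * L * A * (norm01 fin)\<^sup>2"
proof (rule abs_suminf_le[OF assms(2)])
  let ?Q = "(2 * R + 1) * L * A * norm01 fin"
  have Q: "0 \<le> ?Q"
    using R_nonneg L_nonneg A_nonneg number_bound[OF assms(1), of "{}"] by simp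
  fix N
  have "\<bar>\<Sum>n<N. wK (kd K \<epsilon>) (c t) phi (Suc n)\<bar>
      \<le> (\<Sum>n<N. ?Q * (2 * (\<epsilon> * c t (Suc n)) + \<epsilon>\<^sup>2 * (real (Suc n) * c t (Suc n))))"
    by (intro order.trans[OF sum_abs] sum_mono abs_wK_le[OF assms(1)]) simp
  also have "\<dots> = ?Q * (2 * (\<epsilon> * (\<Sum>i=1..N. c t i)) + \<epsilon>\<^sup>2 * (\<Sum>i=1..N. real i * c t i))"
    by (simp add: sum.atLeast1_atMost_eq sum_distrib_left sum.distrib distrib_left)
  also have "\<dots> \<le> ?Q * (2 * norm01 fin + norm01 fin)"
    using number_bound[OF assms(1), of "{1..N}"] mass_bound[OF assms(1), of "{1..N}"] Q
    by (intro mult_left_mono add_mono) auto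
  finally show "\<bar>\<Sum>n<N. wK (kd K \<epsilon>) (c t) phi (Suc n)\<bar> \<le> 3 * (2 * R + 1) * L * A * (norm01 fin)\<^sup>2"
    by (simp add: power2_eq_square algebra_simps)
qed

lemma abs_wC_suminf_row_le:
  assumes "0 \<le> t" "1 \<le> i" "summable (\<lambda>m. wC (kd C \<epsilon>) (c t) phi i m)"
  shows "\<bar>\<Sum>m. wC (kd C \<epsilon>) (c t) phi i m\<bar> \<le> B * L * (R + 1) * norm01 fin * (\<epsilon> * c t i)"
proof (rule abs_suminf_le[OF assms(3)])
  let ?Q = "B * L * \<epsilon> * c t i"
  have Q: "0 \<le> ?Q"
    using B_nonneg L_nonneg eps c_nonneg[OF assms(1,2)] by simp
  have wC_term_le: "\<bar>wC (kd C \<epsilon>) (c t) phi i m\<bar>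
      \<le> B * L * \<epsilon>\<^sup>2 * (\<epsilon> * real (m + i) + R) * c t i * c t (m + i)" for m
  proof -
    have "\<bar>wC (kd C \<epsilon>) (c t) phi i m\<bar> = \<bar>coeff i (m + i) * kd C \<epsilon> i (m + i)\<bar> * c t i * c t (m + i)"
      unfolding wC_eq using c_nonneg[OF assms(1)] assms(2) by (simp add: abs_mult)
    also have "\<dots> \<le> B * L * \<epsilon>\<^sup>2 * (\<epsilon> * real (m + i) + R) * c t i * c t (m + i)"
      using abs_coeff_kd_C_le[OF assms(2), of "m + i"] c_nonneg[OF assms(1)] assms(2)
      by (intro mult_right_mono) auto
    finally show ?thesis .
  qed
  fix n
  have "\<bar>\<Sum>m<n. wC (kd C \<epsilon>) (c t) phi i m\<bar>
      \<le> (\<Sum>m<n. B * L * \<epsilon>\<^sup>2 * (\<epsilon> * real (m + i) + R) * c t i * c t (m + i))"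
    by (intro order.trans[OF sum_abs] sum_mono wC_term_le)
  also have "\<dots> = ?Q * (\<epsilon>\<^sup>2 * (\<Sum>m<n. real (m + i) * c t (m + i)) + R * (\<epsilon> * (\<Sum>m<n. c t (m + i))))"
    by (simp add: sum_distrib_left sum.distrib power2_eq_square algebra_simps)
  also have "\<dots> \<le> ?Q * (norm01 fin + R * norm01 fin)"
    using number_mass_bound_shifted[OF assms(1,2), of n] R_nonneg Q
    by (intro mult_left_mono add_mono) auto
  finally show "\<bar>\<Sum>m<n. wC (kd C \<epsilon>) (c t) phi i m\<bar> \<le> B * L * (R + 1) * norm01 fin * (\<epsilon> * c t i)"
    by (simp add: algebra_simps)
qed

lemma abs_wC_suminf_le:
  assumes "0 \<le> t" and summable: "\<And>i. 1 \<le> i \<Longrightarrow> summable (\<lambda>m. wC (kd C \<epsilon>) (c t) phi i m)"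
    "summable (\<lambda>n. \<Sum>m. wC (kd C \<epsilon>) (c t) phi (Suc n) m)"
  shows "\<bar>\<Sum>n. \<Sum>m. wC (kd C \<epsilon>) (c t) phi (Suc n) m\<bar> \<le> B * L * (R + 1) * (norm01 fin)\<^sup>2"
proof (rule abs_suminf_le[OF summable(2)])
  let ?Q = "B * L * (R + 1) * norm01 fin"
  have Q: "0 \<le> ?Q"
    using R_nonneg L_nonneg B_nonneg number_bound[OF assms(1), of "{}"] by simp
  fix N
  have "\<bar>\<Sum>n<N. \<Sum>m. wC (kd C \<epsilon>) (c t) phi (Suc n) m\<bar> \<le> (\<Sum>n<N. ?Q * (\<epsilon> * c t (Suc n)))"
    using abs_wC_suminf_row_le[OF assms(1) _ summable(1)]
    by (intro order.trans[OF sum_abs] sum_mono) simp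
  also have "\<dots> = ?Q * (\<epsilon> * (\<Sum>i=1..N. c t i))"
    by (simp add: sum.atLeast1_atMost_eq sum_distrib_left)
  also have "\<dots> \<le> ?Q * norm01 fin"
    using number_bound[OF assms(1), of "{1..N}"] Q by (intro mult_left_mono) auto
  finally show "\<bar>\<Sum>n<N. \<Sum>m. wC (kd C \<epsilon>) (c t) phi (Suc n) m\<bar> \<le> B * L * (R + 1) * (norm01 fin)\<^sup>2"
    by (simp add: power2_eq_square)
qed

definition supp_bound :: nat where
  "supp_bound = nat \<lceil>(R + 1) / \<epsilon>\<rceil>"

lemma beyond_supp_bound:
  assumes "supp_bound < i"
  shows "R + 1 \<le> real i * \<epsilon>"
proof -
  have "(R + 1) / \<epsilon> \<le> real supp_bound"
    unfolding supp_bound_def by linarith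
  also have "\<dots> \<le> real i"
    using assms by simp
  finally show ?thesis
    using eps by (simp add: field_simps)
qed

lemma phi_support: "supp_bound < i \<Longrightarrow> phi i = 0"
  by (rule phi_eq_0[OF beyond_supp_bound])

definition test_sum :: "real \<Rightarrow> real" where
  "test_sum t = (\<Sum>i=1..supp_bound. phi i * c t i)"

definition test_sum_deriv :: "real \<Rightarrow> real" where
  "test_sum_deriv t = (\<Sum>i=1..supp_bound. phi i * disc_rhs (kd K \<epsilon>) (kd C \<epsilon>) (c t) i)"

lemma pairing_eq_test_sum: "(LINT x:{0<..}|lborel. feps \<epsilon> c t x * \<Phi> x) = test_sum t"
  using integral_feps_mult[OF lipschitz_on_continuous_on[OF Phi_lipschitz] eps(1)
      Phi_eq_0_on_Lam[OF beyond_supp_bound]]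
  by (simp add: test_sum_def phi_def mult.commute)

lemma test_sum_has_derivative:
  "0 \<le> t \<Longrightarrow> (test_sum has_real_derivative test_sum_deriv t) (at t within {0..})"
  unfolding test_sum_def[abs_def] test_sum_deriv_def by (intro DERIV_sum DERIV_cmult c_ode) auto

lemma continuous_on_test_sum_deriv: "continuous_on {0..} test_sum_deriv"
  unfolding test_sum_deriv_def by (intro continuous_on_sum continuous_on_mult_left c_rhs_cont) auto

lemma test_sum_deriv_eq_weak_rhs:
  assumes "0 \<le> t"
  shows "test_sum_deriv t = weak_rhs (kd K \<epsilon>) (kd C \<epsilon>) (c t) phi"
proof (rule has_real_derivative_within_Ici_unique[OF test_sum_has_derivative[OF assms] _ assms])
  show "(test_sum has_real_derivative weak_rhs (kd K \<epsilon>) (kd C \<epsilon>) (c t) phi) (at t within {0..})"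
    using test_sum_has_weak_derivative[of supp_bound phi, OF phi_support assms]
    by (simp add: test_sum_def[abs_def])
qed

lemma abs_weak_rhs_le:
  assumes "0 \<le> t"
  shows "\<bar>weak_rhs (kd K \<epsilon>) (kd C \<epsilon>) (c t) phi\<bar>
    \<le> L * (3 * (2 * R + 1) * A + (R + 1) * B) * (norm01 fin)\<^sup>2"
proof -
  note summable = weak[OF finite_support_if_zero_beyond[of supp_bound phi, OF phi_support] assms]
  have "\<bar>weak_rhs (kd K \<epsilon>) (kd C \<epsilon>) (c t) phi\<bar>
      \<le> \<bar>\<Sum>n. wK (kd K \<epsilon>) (c t) phi (Suc n)\<bar> + \<bar>\<Sum>n. \<Sum>m. wC (kd C \<epsilon>) (c t) phi (Suc n) m\<bar>"
    unfolding weak_rhs_def by (rule abs_triangle_ineq)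
  also have "\<dots> \<le> 3 * (2 * R + 1) * L * A * (norm01 fin)\<^sup>2 + B * L * (R + 1) * (norm01 fin)\<^sup>2"
    using summable by (intro add_mono abs_wK_suminf_le abs_wC_suminf_le assms) auto
  finally show ?thesis
    by (simp add: algebra_simps)
qed

lemma abs_test_sum_le:
  assumes "0 \<le> t"
  shows "\<bar>test_sum t\<bar> \<le> L * R * norm01 fin"
proof -
  have "\<bar>test_sum t\<bar> \<le> (\<Sum>i=1..supp_bound. \<epsilon> * (L * R) * c t i)"
    unfolding test_sum_def using abs_phi_le c_nonneg[OF assms]
    by (intro order.trans[OF sum_abs] sum_mono) (simp add: abs_mult mult_right_mono)
  also have "\<dots> = L * R * (\<epsilon> * (\<Sum>i=1..supp_bound. c t i))"
    by (simp add: sum_distrib_left ac_simps)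
  also have "\<dots> \<le> L * R * norm01 fin"
    using number_bound[OF assms, of "{1..supp_bound}"] L_nonneg R_nonneg
    by (intro mult_left_mono) auto
  finally show ?thesis .
qed

lemma pairing_W1inf_bound:
  assumes "L * R * norm01 fin \<le> M" "L * (3 * (2 * R + 1) * A + (R + 1) * B) * (norm01 fin)\<^sup>2 \<le> M"
  shows "let g = (\<lambda>t. LINT x:{0<..}|lborel. feps \<epsilon> c t x * \<Phi> x) in
           (\<forall>t\<in>{0..T}. \<bar>g t\<bar> \<le> M)
         \<and> (\<exists>h. set_integrable lborel {0..T} h \<and> (\<forall>t\<in>{0..T}. \<bar>h t\<bar> \<le> M)
                \<and> (\<forall>s t. 0 \<le> s \<and> s \<le> t \<and> t \<le> T \<longrightarrow> g t - g s = (LINT \<tau>:{s..t}|lborel. h \<tau>)))"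
  unfolding Let_def pairing_eq_test_sum
proof (intro conjI ballI exI[of _ test_sum_deriv] allI impI)
  fix t
  assume "t \<in> {0..T}"
  then show "\<bar>test_sum t\<bar> \<le> M"
    using abs_test_sum_le assms(1) by force
  show "\<bar>test_sum_deriv t\<bar> \<le> M"
    using \<open>t \<in> {0..T}\<close> abs_weak_rhs_le test_sum_deriv_eq_weak_rhs assms(2) by force
next
  show "set_integrable lborel {0..T} test_sum_deriv"
    by (intro borel_integrable_atLeastAtMost' continuous_on_subset[OF continuous_on_test_sum_deriv]) auto
next
  fix s t :: real
  assume "0 \<le> s \<and> s \<le> t \<and> t \<le> T"
  then show "test_sum t - test_sum s = (LINT \<tau>:{s..t}|lborel. test_sum_deriv \<tau>)"
    using integral_of_continuous_derivative_within_Ici[OF test_sum_has_derivative continuous_on_test_sum_deriv]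
    by blast
qed

end

theorem lemma3p3:
  fixes K C :: "real \<Rightarrow> real \<Rightarrow> real" and \<alpha> \<beta> :: real
    and fin :: "real \<Rightarrow> real"
    and c :: "real \<Rightarrow> real \<Rightarrow> nat \<Rightarrow> real"
    and \<Phi> :: "real \<Rightarrow> real" and T :: real
  assumes K_nonneg: "\<forall>x\<ge>0. \<forall>y\<ge>0. K x y \<ge> 0"
    and C_nonneg: "\<forall>x\<ge>0. \<forall>y\<ge>0. C x y \<ge> 0"
    and K_sym: "\<forall>x\<ge>0. \<forall>y\<ge>0. K x y = K y x"
    and C_sym: "\<forall>x\<ge>0. \<forall>y\<ge>0. C x y = C y x"
    and K_W1inf_loc: "\<forall>R>0. \<exists>L. L-lipschitz_on ({0..R} \<times> {0..R}) (\<lambda>p. K (fst p) (snd p))"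
    and C_W1inf_loc: "\<forall>R>0. \<exists>L. L-lipschitz_on ({0..R} \<times> {0..R}) (\<lambda>p. C (fst p) (snd p))"
    and \<alpha>_nonneg: "\<alpha> \<ge> 0" and \<beta>_nonneg: "\<beta> \<ge> 0"
    and K_dx: "AE p in (lborel :: (real \<times> real) measure). fst p > 0 \<and> snd p > 0 \<longrightarrow>
                 (\<forall>D. ((\<lambda>x. K x (snd p)) has_real_derivative D) (at (fst p)) \<longrightarrow> D \<ge> - \<alpha>)"
    and C_dx: "AE p in (lborel :: (real \<times> real) measure). fst p > 0 \<and> snd p > 0 \<longrightarrow>
                 (\<forall>D. ((\<lambda>x. C x (snd p)) has_real_derivative D) (at (fst p)) \<longrightarrow> D \<ge> - \<beta>)"
    and CH1: "\<forall>R\<ge>1. ((\<lambda>y. SUP x\<in>{0..R}. K x y / y) \<longlongrightarrow> 0) at_top"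
    and CH2: "\<exists>\<M>\<ge>1. \<forall>R\<ge>1. \<forall>x\<in>{0..R}. \<forall>y\<ge>R. C x y \<le> \<M>"
    and fin_L1: "set_integrable lborel {0<..} (\<lambda>x. (1 + x) * fin x)"
    and fin_nonneg: "AE x in lborel. x > 0 \<longrightarrow> fin x \<ge> 0"
    (* standing assumption: c eps is a solution of the eps-discrete system for every eps in (0,1) *)
    and c0: "\<forall>\<epsilon>\<in>{0<..<1}. \<forall>t\<ge>0. c \<epsilon> t 0 = 0"
    and c_nonneg: "\<forall>\<epsilon>\<in>{0<..<1}. \<forall>t\<ge>0. \<forall>i\<ge>1. c \<epsilon> t i \<ge> 0"
    and c_init: "\<forall>\<epsilon>\<in>{0<..<1}. \<forall>i\<ge>1. c \<epsilon> 0 i = cin fin \<epsilon> i"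
    and c_series: "\<forall>\<epsilon>\<in>{0<..<1}. \<forall>t\<ge>0. \<forall>i\<ge>1.
         summable (\<lambda>n. kd K \<epsilon> i (n + i) * c \<epsilon> t i * c \<epsilon> t (n + i))
       \<and> summable (\<lambda>n. real (n + (i - 1)) * kd C \<epsilon> (i - 1) (n + (i - 1)) * c \<epsilon> t (n + (i - 1)))
       \<and> summable (\<lambda>n. real (n + i) * kd C \<epsilon> i (n + i) * c \<epsilon> t (n + i))"
    and c_ode: "\<forall>\<epsilon>\<in>{0<..<1}. \<forall>i\<ge>1. \<forall>t\<ge>0.
         ((\<lambda>s. c \<epsilon> s i) has_real_derivative disc_rhs (kd K \<epsilon>) (kd C \<epsilon>) (c \<epsilon> t) i) (at t within {0..})"
    and c_C1: "\<forall>\<epsilon>\<in>{0<..<1}. \<forall>i\<ge>1.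
         continuous_on {0..} (\<lambda>t. disc_rhs (kd K \<epsilon>) (kd C \<epsilon>) (c \<epsilon> t) i)"
    and c_weak: "\<forall>\<epsilon>\<in>{0<..<1}. \<forall>\<phi>::nat \<Rightarrow> real. finite {i. \<phi> i \<noteq> 0} \<longrightarrow> (\<forall>t\<ge>0.
         summable (\<lambda>n. wK (kd K \<epsilon>) (c \<epsilon> t) \<phi> (Suc n))
       \<and> (\<forall>i\<ge>1. summable (\<lambda>m. wC (kd C \<epsilon>) (c \<epsilon> t) \<phi> i m))
       \<and> summable (\<lambda>n. \<Sum>m. wC (kd C \<epsilon>) (c \<epsilon> t) \<phi> (Suc n) m)
       \<and> ((\<lambda>s. \<Sum>i\<in>{i. \<phi> i \<noteq> 0 \<and> i \<ge> 1}. \<phi> i * c \<epsilon> s i) has_real_derivative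
            (\<Sum>n. wK (kd K \<epsilon>) (c \<epsilon> t) \<phi> (Suc n))
          + (\<Sum>n. \<Sum>m. wC (kd C \<epsilon>) (c \<epsilon> t) \<phi> (Suc n) m)) (at t within {0..}))"
    and c_mass: "\<forall>\<epsilon>\<in>{0<..<1}. \<forall>t\<ge>0.
         summable (\<lambda>n. real (Suc n) * c \<epsilon> t (Suc n))
       \<and> (\<Sum>n. real (Suc n) * c \<epsilon> t (Suc n)) \<le> (\<Sum>n. real (Suc n) * cin fin \<epsilon> (Suc n))"
    (* Phi in C^1_c([0,infinity)) and T > 0 *)
    and Phi_C1: "\<exists>\<Phi>'. (\<forall>x\<ge>0. (\<Phi> has_real_derivative \<Phi>' x) (at x within {0..})) \<and> continuous_on {0..} \<Phi>'"
    and Phi_supp: "\<exists>R. \<forall>x\<ge>R. \<Phi> x = 0"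
    and T_pos: "T > 0"
  shows "\<exists>M. \<forall>\<epsilon>\<in>{0<..<1}.
           let g = (\<lambda>t. LINT x:{0<..}|lborel. feps \<epsilon> (c \<epsilon>) t x * \<Phi> x) in
           (\<forall>t\<in>{0..T}. \<bar>g t\<bar> \<le> M)
         \<and> (\<exists>h. set_integrable lborel {0..T} h \<and> (\<forall>t\<in>{0..T}. \<bar>h t\<bar> \<le> M)
                \<and> (\<forall>s t. 0 \<le> s \<and> s \<le> t \<and> t \<le> T \<longrightarrow> g t - g s = (LINT \<tau>:{s..t}|lborel. h \<tau>)))"
proof -
  obtain L R where R: "1 \<le> R" and Phi_lip: "L-lipschitz_on {0..} \<Phi>"
    and Phi_vanish: "\<And>x. R \<le> x \<Longrightarrow> \<Phi> x = 0"
    using C1_compact_support_imp_lipschitz[OF Phi_C1 Phi_supp] by blast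
  obtain A where A: "0 \<le> A" "\<And>x y. 0 \<le> x \<Longrightarrow> 0 \<le> y \<Longrightarrow> y \<le> R + 2 \<Longrightarrow> K x y \<le> A * (1 + x)"
    using kernel_linear_growth[OF K_sym K_W1inf_loc, of "R + 2"] CH1 R by auto
  obtain B where B: "0 \<le> B" "\<And>x y. 0 \<le> x \<Longrightarrow> x \<le> R + 2 \<Longrightarrow> 0 \<le> y \<Longrightarrow> C x y \<le> B"
    using kernel_bounded_strip[OF C_nonneg C_W1inf_loc CH2, of "R + 2"] R by auto
  define M where "M = max (L * R * norm01 fin) (L * (3 * (2 * R + 1) * A + (R + 1) * B) * (norm01 fin)\<^sup>2)"
  show ?thesis (is "\<exists>M. \<forall>\<epsilon>\<in>{0<..<1}. ?bounded M \<epsilon>")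
  proof (intro exI[of _ M] ballI)
    fix \<epsilon> :: real
    assume \<epsilon>: "\<epsilon> \<in> {0<..<1}"
    interpret discrete_solution_test K C \<epsilon> "c \<epsilon>" fin \<Phi> L R A B
    proof unfold_locales
      show "0 \<le> kd K \<epsilon> i j" "0 \<le> kd C \<epsilon> i j" if "1 \<le> i" "1 \<le> j" for i j
        using \<epsilon> that K_nonneg C_nonneg by (simp_all add: kd_nonneg)
    qed (use \<epsilon> R c_nonneg c_init c_mass c_ode c_C1 c_weak fin_L1 fin_nonneg Phi_lip Phi_vanish A B
      in \<open>simp_all add: weak_rhs_def\<close>)
    show "?bounded M \<epsilon>"
      by (rule pairing_W1inf_bound) (simp_all add: M_def)
  qed
qed

end
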